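(* Let $b\ge 2$. For every finite nonempty string $I$ of base-$b$ digits there exist infinitely many $b$-wMRH numbers whose base-$b$ representation contains $I$ as a contiguous substring.
   Context: Fix a base $b\ge 2$. $s_b(N)$ is the sum of the base-$b$ digits of $N$. For a positive integer $X$, its reversal $X^R$ is the integer whose base-$b$ representation is that of $X$ written in reverse order (leading zeros of the result are dropped). A positive integer $N$ is a $b$-wMRH number if there exists an integer $A\ge 0$ such that $N=(A+s_b(N))\cdot(A+s_b(N))^R$. *)

theory Defs
  imports Main "HOL-Library.Sublist"
begin

fun digits :: "nat \<Rightarrow> nat \<Rightarrow> nat list" where
  "digits b n = (if n = 0 \<or> b < 2 then [] else n mod b # digits b (n div b))"

fun from_digits :: "nat \<Rightarrow> nat list \<Rightarrow> nat" where
  "from_digits b [] = 0"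
| "from_digits b (d # ds) = d + b * from_digits b ds"

definition repr :: "nat \<Rightarrow> nat \<Rightarrow> nat list" where
  "repr b n = rev (digits b n)"

definition digit_sum :: "nat \<Rightarrow> nat \<Rightarrow> nat" where
  "digit_sum b n = sum_list (digits b n)"

text \<open>Reversal: the number whose representation is repr b X reversed (leading zeros dropped).\<close>
definition reversal :: "nat \<Rightarrow> nat \<Rightarrow> nat" where
  "reversal b X = from_digits b (rev (rev (repr b X)))"

definition wMRH :: "nat \<Rightarrow> nat \<Rightarrow> bool" where
  "wMRH b N \<longleftrightarrow> N > 0 \<and>
     (\<exists>A::nat. N = (A + digit_sum b N) * reversal b (A + digit_sum b N))"

end

theory Submission
  imports Defs
begin

text \<open>
  Let \<open>X\<close> be the number with base-\<open>b\<close> representation \<open>1 0\<dots>0 I\<close>, with \<open>L = |I|\<close>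
  zeros.  Its reversal is \<open>1\<close> modulo \<open>b^(L+1)\<close> and \<open>X\<close> is the value of \<open>I\<close> modulo
  \<open>b^L\<close>, so the representation of \<open>N = X \<cdot> X\<^sup>R\<close> ends in \<open>I\<close>.  Appending \<open>k\<close> zeros to
  \<open>X\<close> leaves \<open>X\<^sup>R\<close> unchanged and appends \<open>k\<close> zeros to \<open>N\<close>, so
  \<open>N b^k = (X b^k) (X b^k)\<^sup>R\<close> has the same digit sum \<open>s\<close> as \<open>N\<close>; once \<open>X b^k \<ge> s\<close>,
  the choice \<open>A = X b^k - s\<close> witnesses that \<open>N b^k\<close> is \<open>b\<close>-wMRH.
\<close>

declare digits.simps[simp del]

lemma digits_0 [simp]: "digits b 0 = []"
  by (subst digits.simps) simp

lemma from_digits_append: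
  "from_digits b (xs @ ys) = from_digits b xs + b ^ length xs * from_digits b ys"
  by (induction xs) (auto simp: algebra_simps)

lemma from_digits_replicate_0 [simp]: "from_digits b (replicate n 0) = 0"
  by (induction n) auto

lemma digits_from_digits_append:
  assumes "b \<ge> 2" "\<forall>d\<in>set ds. d < b" "M > 0"
  shows "digits b (from_digits b ds + b ^ length ds * M) = ds @ digits b M"
  using assms(2)
proof (induction ds)
  case Nil
  then show ?case by simp
next
  case (Cons d ds)
  define r where "r = from_digits b ds + b ^ length ds * M"
  have "from_digits b (d # ds) + b ^ length (d # ds) * M = d + b * r"
    by (simp add: r_def algebra_simps)
  then have "digits b (from_digits b (d # ds) + b ^ length (d # ds) * M) = digits b (d + b * r)"
    by (simp only:)
  also have "\<dots> = d # digits b r"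
    using Cons.prems assms by (subst digits.simps) (simp add: r_def)
  also have "\<dots> = (d # ds) @ digits b M"
    using Cons by (simp add: r_def)
  finally show ?case .
qed

corollary repr_from_digits_append:
  assumes "b \<ge> 2" "\<forall>d\<in>set ds. d < b" "M > 0"
  shows "repr b (from_digits b ds + b ^ length ds * M) = repr b M @ rev ds"
  using digits_from_digits_append[OF assms] by (simp add: repr_def)

lemma digits_mult_power:
  assumes "b \<ge> 2" "n > 0"
  shows "digits b (n * b ^ k) = replicate k 0 @ digits b n"
proof (induction k)
  case 0
  then show ?case by simp
next
  case (Suc k)
  have "digits b (from_digits b [0] + b ^ length [0::nat] * (n * b ^ k))
          = 0 # digits b (n * b ^ k)"
    using digits_from_digits_append[of b "[0]" "n * b ^ k"] assms by simp
  with Suc show ?case by (simp add: mult.left_commute replicate_append_same[symmetric])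
qed

lemma repr_mult_power:
  "b \<ge> 2 \<Longrightarrow> n > 0 \<Longrightarrow> repr b (n * b ^ k) = repr b n @ replicate k 0"
  by (simp add: repr_def digits_mult_power)

lemma digit_sum_mult_power:
  "b \<ge> 2 \<Longrightarrow> n > 0 \<Longrightarrow> digit_sum b (n * b ^ k) = digit_sum b n"
  by (simp add: digit_sum_def digits_mult_power)

lemma reversal_mult_power:
  "b \<ge> 2 \<Longrightarrow> n > 0 \<Longrightarrow> reversal b (n * b ^ k) = reversal b n"
  by (simp add: reversal_def repr_mult_power from_digits_append)

lemma wMRH_if_product_with_reversal:
  assumes "N > 0" "N = Y * reversal b Y" "digit_sum b N \<le> Y"
  shows "wMRH b N"
  unfolding wMRH_def
proof (intro conjI exI)
  show "N > 0" by fact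
  show "N = (Y - digit_sum b N + digit_sum b N) * reversal b (Y - digit_sum b N + digit_sum b N)"
    using assms by simp
qed

lemma wMRH_product_with_reversal_mult_power:
  assumes "b \<ge> 2" "X * reversal b X > 0" "digit_sum b (X * reversal b X) \<le> k"
  shows "wMRH b (X * reversal b X * b ^ k)"
proof (rule wMRH_if_product_with_reversal)
  have "X > 0" using assms(2) by simp
  show "X * reversal b X * b ^ k > 0" using assms by simp
  show "X * reversal b X * b ^ k = X * b ^ k * reversal b (X * b ^ k)"
    using reversal_mult_power[OF assms(1) \<open>X > 0\<close>] by simp
  have "k \<le> X * b ^ k"
    using order_trans[OF self_le_ge2_pow[OF assms(1)]] \<open>X > 0\<close> by simp
  then show "digit_sum b (X * reversal b X * b ^ k) \<le> X * b ^ k"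
    using assms digit_sum_mult_power by simp
qed

lemma exists_product_with_reversal_ending_in:
  assumes "b \<ge> 2" "\<forall>d\<in>set I. d < b"
  obtains X where "X * reversal b X > 0" "suffix I (repr b (X * reversal b X))"
proof
  define L where "L = length I"
  define u where "u = from_digits b (rev I)"
  define u' where "u' = from_digits b I"
  define ds where "ds = rev I @ replicate L 0"
  define X where "X = from_digits b ds + b ^ length ds * 1"
  have "digits b X = ds @ digits b 1"
    unfolding X_def using assms by (intro digits_from_digits_append) (auto simp: ds_def)
  moreover have "digits b 1 = [1]"
    using assms(1) by (subst digits.simps) simp
  ultimately have "reversal b X = 1 + b ^ (L + 1) * u'"
    by (simp add: reversal_def repr_def from_digits_append ds_def u'_def L_def)
  moreover have "X = u + b ^ L * b ^ L"
    by (simp add: X_def ds_def from_digits_append u_def L_def power_add)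
  ultimately have product: "X * reversal b X
      = from_digits b (rev I) + b ^ length (rev I) * (b * u * u' + b ^ L + b * b ^ L * b ^ L * u')"
    by (simp add: u_def L_def algebra_simps)
  show "X * reversal b X > 0"
    using assms(1) product by simp
  show "suffix I (repr b (X * reversal b X))"
    unfolding product using repr_from_digits_append[of b "rev I"] assms
    by (simp add: suffix_def)
qed

theorem corollary14:
  fixes b :: nat and I :: "nat list"
  assumes "b \<ge> 2" and "I \<noteq> []" and "\<forall>d\<in>set I. d < b"
  shows "infinite {N. wMRH b N \<and> sublist I (repr b N)}"
proof -
  obtain X where X: "X * reversal b X > 0" "suffix I (repr b (X * reversal b X))"
    using exists_product_with_reversal_ending_in[OF assms(1,3)] .
  define N0 where "N0 = X * reversal b X"
  define s where "s = digit_sum b N0"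
  have "(\<lambda>k. N0 * b ^ k) ` {s..} \<subseteq> {N. wMRH b N \<and> sublist I (repr b N)}"
  proof safe
    fix k assume "s \<le> k"
    then show "wMRH b (N0 * b ^ k)"
      using wMRH_product_with_reversal_mult_power[OF assms(1) X(1)] by (simp add: N0_def s_def)
    obtain ps where "repr b N0 = ps @ I"
      using X(2) by (auto simp: N0_def suffix_def)
    then show "sublist I (repr b (N0 * b ^ k))"
      using X(1) repr_mult_power[OF assms(1)] by (simp add: N0_def)
  qed
  moreover have "inj (\<lambda>k. N0 * b ^ k)"
    using X(1) assms(1) by (intro injI) (simp add: N0_def)
  ultimately show ?thesis
    using infinite_Ici[of s] by (meson finite_imageD finite_subset inj_on_subset subset_UNIV)
qed

end
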